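(* Let $n\ge 6$ be even. If $n\equiv 0\pmod 4$, there are exactly $n+2$ circulant Latin squares of order $n$ with inner distance $\frac n2-1$ and symbol $1$ in cell $(1,1)$, and exactly $n+2$ such back-circulant Latin squares. If $n\equiv 2\pmod 4$, there are exactly $n$ of each type.
   Context: Symbols are $[1,n]$; $\mathrm{dist}(a,b)$ is the minimum of the residues of $a-b$ and $b-a$ modulo $n$ (in $[0,n-1]$). A Latin square of order $n$ is an $n\times n$ matrix over $[1,n]$ with each symbol exactly once in every row and column; its inner distance is the minimum of $\mathrm{dist}$ over symbols in horizontally or vertically adjacent cells. A circulant Latin square is one in which each row $i+1$ is row $i$ cyclically shifted one position to the right; a back-circulant Latin square is one in which each row $i+1$ is row $i$ cyclically shifted one position to the left. *)

theory Defs
  imports Main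
begin

text \<open>An n x n matrix is a function nat => nat => nat; rows/columns are indexed
  0..n-1 (paper's row r is index r-1). To make the set of matrices finite
  we require entries outside the n x n block to be 0.\<close>

definition is_matrix :: "nat \<Rightarrow> (nat \<Rightarrow> nat \<Rightarrow> nat) \<Rightarrow> bool" where
  "is_matrix n L \<longleftrightarrow> (\<forall>i j. (n \<le> i \<or> n \<le> j) \<longrightarrow> L i j = 0)"

definition latin_square :: "nat \<Rightarrow> (nat \<Rightarrow> nat \<Rightarrow> nat) \<Rightarrow> bool" where
  "latin_square n L \<longleftrightarrow> is_matrix n L \<and>
     (\<forall>i<n. bij_betw (\<lambda>j. L i j) {0..<n} {1..n}) \<and>
     (\<forall>j<n. bij_betw (\<lambda>i. L i j) {0..<n} {1..n})"

definition sym_dist :: "nat \<Rightarrow> nat \<Rightarrow> nat \<Rightarrow> nat" where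
  "sym_dist n a b = nat (min ((int a - int b) mod int n) ((int b - int a) mod int n))"

definition inner_distance :: "nat \<Rightarrow> (nat \<Rightarrow> nat \<Rightarrow> nat) \<Rightarrow> nat" where
  "inner_distance n L = Min
     ({sym_dist n (L i j) (L i (j+1)) | i j. i < n \<and> j + 1 < n} \<union>
      {sym_dist n (L i j) (L (i+1) j) | i j. i + 1 < n \<and> j < n})"

definition circulant :: "nat \<Rightarrow> (nat \<Rightarrow> nat \<Rightarrow> nat) \<Rightarrow> bool" where
  "circulant n L \<longleftrightarrow> (\<forall>i j. i + 1 < n \<and> j < n \<longrightarrow> L (i+1) ((j+1) mod n) = L i j)"

definition back_circulant :: "nat \<Rightarrow> (nat \<Rightarrow> nat \<Rightarrow> nat) \<Rightarrow> bool" where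
  "back_circulant n L \<longleftrightarrow> (\<forall>i j. i + 1 < n \<and> j < n \<longrightarrow> L (i+1) j = L i ((j+1) mod n))"

end

theory Submission
  imports Defs "HOL-Number_Theory.Cong"
begin

text \<open>A circulant or back-circulant Latin square is determined by its first row \<open>r\<close>, and
  every pair of adjacent cells holds two cyclically consecutive entries of \<open>r\<close>, so the inner
  distance is the least distance between cyclically consecutive entries of \<open>r\<close>. For
  \<open>n = 2 * h\<close> the distance of \<open>a\<close> and \<open>b\<close> is \<open>h - \<bar>(b - a) mod n - h\<bar>\<close>, so inner distance
  \<open>h - 1\<close> means that \<open>r\<close>, read cyclically in \<open>\<int>/n\<close>, advances by \<open>h + e\<^sub>k\<close> with
  \<open>e\<^sub>k \<in> {-1, 0, 1}\<close>, not all zero.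

  Since the entries are distinct, no two consecutive terms of \<open>e\<close> cancel. If no \<open>e\<^sub>k\<close> vanishes, \<open>e\<close> is constant
  \<open>\<plusminus>1\<close>, and the row \<open>k (h \<plusminus> 1) mod n\<close> is a permutation iff \<open>h\<close> is even. If some \<open>e\<^sub>k\<close>
  vanishes, an intermediate value argument for the partial sums of \<open>e\<close> shows that its
  neighbours have opposite signs, and reflecting about it forces \<open>e\<close> to be a rotation of
  the zigzag \<open>0, 1, \<dots>, 1, 0, -1, \<dots>, -1\<close>; each of the \<open>n\<close> rotations does give a
  permutation. Hence there are \<open>n + 2\<close> first rows for even \<open>h\<close> and \<open>n\<close> for odd \<open>h\<close>; the
  argument works for every even \<open>n \<ge> 4\<close>.\<close>

lemma periodic_mod:
  fixes f :: "nat \<Rightarrow> 'a" and n :: nat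
  assumes "\<And>k. f (k + n) = f k"
  shows "f k = f (k mod n)"
proof -
  have "f (j + m * n) = f j" for j m
    by (induction m) (simp_all add: add.assoc[symmetric] add.commute[of n] assms)
  then show ?thesis
    by (metis mod_div_mult_eq)
qed

lemma nat_intermed_int_val_between:
  fixes f :: "nat \<Rightarrow> int"
  assumes "\<And>i. \<bar>f (Suc i) - f i\<bar> \<le> 1" "m \<le> n"
    and "min (f m) (f n) \<le> c" "c \<le> max (f m) (f n)"
  shows "\<exists>i. m \<le> i \<and> i \<le> n \<and> f i = c"
proof (cases "f m \<le> f n")
  case True
  then show ?thesis
    using nat_intermed_int_val[of m n f c] assms by auto
next
  case False
  have "\<bar>- f (Suc i) - - f i\<bar> \<le> 1" for i
    using assms(1)[of i] by arith
  then obtain i where "m \<le> i \<and> i \<le> n \<and> - f i = - c"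
    using nat_intermed_int_val[of m n "\<lambda>i. - f i" "- c"] assms False by auto
  then show ?thesis
    by auto
qed

lemma mod_add_complement:
  fixes k n :: nat
  assumes "0 < n"
  shows "(k + (t + (n - k mod n) mod n) mod n) mod n = t mod n"
proof -
  have "(k + (n - k mod n)) mod n = 0"
    using assms by (metis le_add_diff_inverse mod_add_left_eq mod_le_divisor mod_self)
  then show ?thesis
    by (metis add.left_commute add_0_right mod_add_right_eq)
qed

section \<open>Near-antipodal tours\<close>

definition zigzag_step :: "nat \<Rightarrow> nat \<Rightarrow> int" where
  "zigzag_step h j = (if j = 0 \<or> j = h then 0 else if j < h then 1 else -1)"

definition tour_step :: "nat \<Rightarrow> nat \<Rightarrow> (nat \<Rightarrow> int) \<Rightarrow> nat \<Rightarrow> int" where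
  "tour_step n h V k = (V (Suc k) - V k) mod int n - int h"

text \<open>A tour enumerates \<open>{0..<n}\<close> periodically, each move going to a nearly antipodal
  point: \<open>V (Suc k) = V k + h + e\<close> modulo \<open>n = 2 * h\<close> with \<open>\<bar>e\<bar> \<le> 1\<close>. The first row
  \<open>r\<close> of a square is read as the tour \<open>V k = r (k mod n) - 1\<close>.\<close>

locale near_antipodal_tour =
  fixes n h :: nat and V :: "nat \<Rightarrow> int"
  assumes n_eq: "n = 2 * h" and h_ge: "2 \<le> h"
    and V_nonneg: "0 \<le> V k" and V_less: "V k < int n"
    and V_periodic: "V (k + n) = V k"
    and V_inj: "i < n \<Longrightarrow> j < n \<Longrightarrow> V i = V j \<Longrightarrow> i = j"
    and step_bound: "\<bar>tour_step n h V k\<bar> \<le> 1"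
begin

abbreviation step where "step \<equiv> tour_step n h V"

lemma n_gt_2: "2 < n"
  using n_eq h_ge by simp

lemma V_mod_eq: "V k mod int n = V k"
  using V_nonneg V_less by simp

lemma V_Suc: "V (Suc k) = (V k + int h + step k) mod int n"
proof -
  have "(V k + int h + step k) mod int n = (V k + (V (Suc k) - V k) mod int n) mod int n"
    by (simp add: tour_step_def)
  also have "\<dots> = V (Suc k)"
    by (simp add: mod_add_right_eq V_mod_eq)
  finally show ?thesis ..
qed

lemma V_add_sum: "V (a + j) = (V a + int j * int h + (\<Sum>i<j. step (a + i))) mod int n"
proof (induction j)
  case 0
  show ?case by (simp add: V_mod_eq)
next
  case (Suc j)
  have "V (a + Suc j) = (V (a + j) + int h + step (a + j)) mod int n"
    using V_Suc[of "a + j"] by simp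
  also have "\<dots> = (V a + int j * int h + (\<Sum>i<j. step (a + i)) + int h + step (a + j)) mod int n"
    unfolding Suc.IH by (metis add.assoc mod_add_left_eq)
  also have "\<dots> = (V a + int (Suc j) * int h + (\<Sum>i<Suc j. step (a + i))) mod int n"
    by (simp add: algebra_simps)
  finally show ?case .
qed

lemma V_eq_iff: "V i = V j \<longleftrightarrow> i mod n = j mod n"
  using periodic_mod[of V, OF V_periodic] V_inj n_gt_2
  by (metis mod_less_divisor zero_less_numeral less_trans)

lemma V_add_ne: "0 < j \<Longrightarrow> j < n \<Longrightarrow> V (k + j) \<noteq> V k"
  unfolding V_eq_iff by (metis add_diff_cancel_left' le_add1 mod_eq_dvd_iff_nat nat_dvd_not_less)

lemma step_periodic: "step (k + n) = step k"
  using V_periodic[of "Suc k"] V_periodic[of k] by (simp add: tour_step_def)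

lemma step_cases: "step k = -1 \<or> step k = 0 \<or> step k = 1"
  using step_bound[of k] by linarith

lemma step_add_Suc_ne_0: "step k + step (Suc k) \<noteq> 0"
proof
  assume "step k + step (Suc k) = 0"
  then have "V (k + 2) = (V k + int n) mod int n"
    using V_add_sum[of k 2] n_eq by (simp add: numeral_2_eq_2)
  then show False
    using V_add_ne[of 2 k] n_gt_2 by (simp add: V_mod_eq)
qed

lemma step_Suc_eq: "step k \<noteq> 0 \<Longrightarrow> step (Suc k) \<noteq> 0 \<Longrightarrow> step (Suc k) = step k"
  using step_add_Suc_ne_0[of k] step_cases[of k] step_cases[of "Suc k"] by auto

lemma step_Suc_ne_0: "step k = 0 \<Longrightarrow> step (Suc k) \<noteq> 0"
  using step_add_Suc_ne_0[of k] by simp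

lemma period_sum_dvd: "int n dvd (\<Sum>i<n. step (a + i))"
proof -
  have "(V a + int n * int h + (\<Sum>i<n. step (a + i))) mod int n = V a mod int n"
    using V_add_sum[of a n] V_periodic[of a] by (simp add: V_mod_eq add.commute)
  then have "int n dvd (V a + int n * int h + (\<Sum>i<n. step (a + i))) - V a"
    by (simp only: mod_eq_dvd_iff)
  then show ?thesis
    by (simp add: dvd_add_right_iff)
qed

lemma constant_steps:
  assumes nonzero: "\<And>k. step k \<noteq> 0"
  shows "even h" and "\<exists>\<sigma>\<in>{1, -1}. \<forall>k. step k = \<sigma>"
proof -
  have const: "step k = step 0" for k
    by (induction k) (simp_all add: step_Suc_eq nonzero)
  show "\<exists>\<sigma>\<in>{1, -1}. \<forall>k. step k = \<sigma>"
    using const step_cases[of 0] nonzero[of 0] by auto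
  show "even h"
  proof (rule ccontr)
    assume "odd h"
    then have "even (int h + step 0)"
      using step_cases[of 0] nonzero[of 0] by auto
    then obtain t where t: "int h + step 0 = 2 * t"
      by blast
    have "(\<Sum>i<h. step i) = int h * step 0"
      using sum.cong[of "{..<h}" "{..<h}" step "\<lambda>_. step 0"] const by simp
    then have "V (0 + h) = (V 0 + int h * (int h + step 0)) mod int n"
      using V_add_sum[of 0 h] by (simp add: algebra_simps)
    also have "\<dots> = (V 0 + int n * t) mod int n"
      using t n_eq by (simp add: algebra_simps)
    finally have "V (0 + h) = V 0"
      by (simp add: V_mod_eq)
    then show False
      using V_add_ne[of h 0] n_eq h_ge by simp
  qed
qed

lemma sum_steps_ne_0_after_zero:
  assumes zero: "step k = 0" and j: "2 \<le> j" "j < n"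
  shows "(\<Sum>i<j. step (k + i)) \<noteq> 0"
proof
  assume "(\<Sum>i<j. step (k + i)) = 0"
  then have Vj: "V (k + j) = (V k + int j * int h) mod int n"
    using V_add_sum[of k j] by simp
  show False
  proof (cases "even j")
    case True
    then obtain t where "j = 2 * t"
      by blast
    then have "int j * int h = int n * int t"
      using n_eq by simp
    then have "V (k + j) = V k"
      using Vj by (simp add: V_mod_eq)
    then show False
      using V_add_ne j by simp
  next
    case False
    then obtain t where "j = 2 * t + 1"
      by (blast elim: oddE)
    then have "int j * int h = int h + int n * int t"
      using n_eq by (simp add: algebra_simps)
    then have "V (Suc k + (j - 1)) = (V k + int h) mod int n"
      using Vj j by (simp add: add.assoc[symmetric] mod_add_right_eq)
    also have "\<dots> = V (Suc k)"
      using V_Suc[of k] zero by simp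
    moreover have "V (Suc k + (j - 1)) \<noteq> V (Suc k)"
      by (rule V_add_ne) (use j in auto)
    ultimately show False
      by simp
  qed
qed

text \<open>The partial sums of the steps after a zero step form a walk with increments in
  \<open>{-1, 0, 1}\<close> that returns to 0 after a period. If both neighbours of the zero step had
  the same sign, the walk would run from \<open>\<sigma>\<close> to \<open>-\<sigma>\<close> within the period and hence hit 0,
  which makes \<open>V\<close> revisit a value.\<close>

lemma zero_step_reverses:
  assumes zero: "step k = 0"
  shows "step (k + n - 1) = - step (Suc k)"
proof -
  define Q where "Q j = (\<Sum>i<j. step (k + i))" for j
  obtain m where m: "n = Suc m"
    using n_gt_2 by (cases n) auto
  have Q_Suc: "Q (Suc j) = Q j + step (k + j)" for j
    by (simp add: Q_def)
  have Q_n: "Q n = 0"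
  proof -
    have "Q n = step (k + 0) + (\<Sum>i<m. step (k + Suc i))"
      unfolding Q_def m by (rule sum.lessThan_Suc_shift)
    then have "Q n = (\<Sum>i<m. step (k + Suc i))"
      using zero by simp
    also have "\<bar>\<dots>\<bar> \<le> (\<Sum>i<m. \<bar>step (k + Suc i)\<bar>)"
      by (rule sum_abs)
    also have "\<dots> \<le> (\<Sum>i<m. 1)"
      by (rule sum_mono) (rule step_bound)
    finally have "\<bar>Q n\<bar> < int n"
      using m by simp
    moreover have "int n dvd Q n"
      unfolding Q_def by (rule period_sum_dvd)
    ultimately show ?thesis
      using dvd_imp_le_int[of "Q n" "int n"] by linarith
  qed
  have "step (k + n - 1) \<noteq> 0"
    using step_add_Suc_ne_0[of "k + n - 1"] step_periodic[of k] zero n_gt_2 by simp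
  moreover have "step (Suc k) \<noteq> 0"
    using step_Suc_ne_0 zero by blast
  moreover have "step (k + n - 1) \<noteq> step (Suc k)"
  proof
    assume same: "step (k + n - 1) = step (Suc k)"
    have "Q 2 = step (Suc k)"
      using zero by (simp add: Q_def numeral_2_eq_2)
    moreover have "Q (n - 1) = - step (Suc k)"
      using Q_n Q_Suc[of "n - 1"] same m by simp
    ultimately have "min (Q 2) (Q (n - 1)) \<le> 0" "0 \<le> max (Q 2) (Q (n - 1))"
      by linarith+
    moreover have "\<bar>Q (Suc j) - Q j\<bar> \<le> 1" for j
      using Q_Suc step_bound by simp
    moreover have "2 \<le> n - 1"
      using n_gt_2 by simp
    ultimately obtain j where "2 \<le> j" "j \<le> n - 1" "Q j = 0"
      using nat_intermed_int_val_between[of Q 2 "n - 1" 0] by blast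
    then show False
      using sum_steps_ne_0_after_zero[OF zero, of j] n_gt_2 unfolding Q_def by simp
  qed
  ultimately show ?thesis
    using step_cases[of "k + n - 1"] step_cases[of "Suc k"] by auto
qed

lemma add_half_twice_mod: "((x + int h) mod int n + int h) mod int n = x mod int n"
proof -
  have "x + int h + int h = x + int n"
    using n_eq by simp
  then show ?thesis
    by (simp add: mod_simps)
qed

text \<open>Reflection about a zero step at \<open>k\<close>: \<open>V (k + 1 + i)\<close> stays antipodal to \<open>V (k - i)\<close>,
  and the runs of equal steps on both sides cannot stop before reaching \<open>k \<plusminus> h\<close>.\<close>

lemma mirror_step:
  assumes V: "V (k + Suc i) = (V (k + n - i) + int h) mod int n"
    and steps: "step (k + Suc i) = \<sigma>" "step (k + n - Suc i) = - \<sigma>" and i: "i < n"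
  shows "V (k + Suc (Suc i)) = (V (k + n - Suc i) + int h) mod int n"
proof -
  let ?W = "V (k + n - Suc i)"
  have V_pred: "V (k + n - i) = (?W + int h - \<sigma>) mod int n"
    using V_Suc[of "k + n - Suc i"] steps i by (simp add: Suc_diff_Suc)
  have "V (k + Suc (Suc i)) = (V (k + Suc i) + (int h + \<sigma>)) mod int n"
    using V_Suc[of "k + Suc i"] steps by (simp add: add.assoc)
  also have "\<dots> = (V (k + n - i) + (int h + (int h + \<sigma>))) mod int n"
    unfolding V by (simp add: mod_add_left_eq add.assoc)
  also have "\<dots> = (?W + int h - \<sigma> + (int h + (int h + \<sigma>))) mod int n"
    unfolding V_pred by (rule mod_add_left_eq)
  also have "\<dots> = (?W + int h + int n) mod int n"
    using n_eq by (simp add: algebra_simps)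
  finally show ?thesis
    by simp
qed

lemma mirror:
  assumes zero: "step k = 0" and i: "Suc i < h"
  shows "step (k + Suc i) = step (Suc k) \<and> step (k + n - Suc i) = - step (Suc k)
    \<and> V (k + Suc i) = (V (k + n - i) + int h) mod int n"
  using i
proof (induction i)
  case 0
  show ?case
    using zero_step_reverses[OF zero] V_Suc[of k] V_periodic[of k] zero by simp
next
  case (Suc i)
  let ?\<sigma> = "step (Suc k)"
  have IH: "step (k + Suc i) = ?\<sigma>" "step (k + n - Suc i) = - ?\<sigma>"
    "V (k + Suc i) = (V (k + n - i) + int h) mod int n"
    using Suc by simp_all
  have V: "V (k + Suc (Suc i)) = (V (k + n - Suc i) + int h) mod int n"
    by (rule mirror_step[OF IH(3,1,2)]) (use Suc.prems n_eq in simp)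
  define d where "d = n - 2 * Suc (Suc i)"
  have d: "0 < d" "d < n" "k + Suc (Suc (Suc i)) + d = k + n - Suc i"
    "k + Suc (Suc i) + d = k + n - Suc (Suc i)"
    using Suc.prems n_eq unfolding d_def by simp_all
  have "step (k + Suc (Suc i)) \<noteq> 0"
  proof
    assume "step (k + Suc (Suc i)) = 0"
    then have "V (k + Suc (Suc (Suc i))) = (V (k + Suc (Suc i)) + int h) mod int n"
      using V_Suc[of "k + Suc (Suc i)"] by simp
    also have "\<dots> = V (k + Suc (Suc (Suc i)) + d)"
      unfolding V d(3) by (simp add: add_half_twice_mod V_mod_eq)
    finally show False
      using V_add_ne[OF d(1,2)] by metis
  qed
  moreover have "step (k + n - Suc (Suc i)) \<noteq> 0"
  proof
    assume "step (k + n - Suc (Suc i)) = 0"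
    then have "V (k + n - Suc i) = (V (k + n - Suc (Suc i)) + int h) mod int n"
      using V_Suc[of "k + n - Suc (Suc i)"] Suc.prems n_eq by (simp add: Suc_diff_Suc)
    then have "V (k + Suc (Suc i)) = V (k + Suc (Suc i) + d)"
      unfolding V d(4) by (simp add: add_half_twice_mod V_mod_eq)
    then show False
      using V_add_ne[OF d(1,2)] by metis
  qed
  moreover have "Suc (k + n - Suc (Suc i)) = k + n - Suc i"
    using Suc.prems n_eq by simp
  ultimately show ?case
    using V IH step_Suc_eq[of "k + Suc i"] step_Suc_eq[of "k + n - Suc (Suc i)"]
      step_Suc_ne_0[OF zero] by auto
qed

lemma zero_step_zigzag:
  assumes zero: "step k = 0" and j: "j < n"
  shows "step (k + j) = step (Suc k) * zigzag_step h j"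
proof -
  let ?\<sigma> = "step (Suc k)"
  have \<sigma>: "?\<sigma> \<noteq> 0"
    using step_Suc_ne_0[OF zero] .
  have mirror': "step (k + i) = ?\<sigma> \<and> step (k + n - i) = - ?\<sigma>" if "0 < i" "i < h" for i
    using mirror[OF zero, of "i - 1"] that by simp
  have at_h: "step (k + h) = 0"
  proof (rule ccontr)
    assume nz: "step (k + h) \<noteq> 0"
    have "Suc (k + (h - 1)) = k + h" "k + n - (h - 1) = Suc (k + h)"
      using h_ge n_eq by simp_all
    then have "step (k + h) = ?\<sigma>" "step (Suc (k + h)) = - ?\<sigma>"
      using mirror'[of "h - 1"] step_Suc_eq[of "k + (h - 1)"] nz \<sigma> h_ge by auto
    then show False
      using step_add_Suc_ne_0[of "k + h"] by simp
  qed
  consider "j = 0" | "0 < j \<and> j < h" | "j = h" | "h < j"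
    by linarith
  then show ?thesis
  proof cases
    case 1
    then show ?thesis using zero by (simp add: zigzag_step_def)
  next
    case 2
    then show ?thesis using mirror'[of j] by (simp add: zigzag_step_def)
  next
    case 3
    then show ?thesis using at_h by (simp add: zigzag_step_def)
  next
    case 4
    then show ?thesis using mirror'[of "n - j"] j n_eq by (simp add: zigzag_step_def)
  qed
qed

lemma step_classification:
  "(\<exists>s<n. \<forall>t. step t = zigzag_step h ((t + s) mod n))
    \<or> (even h \<and> (\<exists>\<sigma>\<in>{1, -1}. \<forall>t. step t = \<sigma>))"
proof (cases "\<exists>k. step k = 0")
  case False
  then show ?thesis
    using constant_steps by blast
next
  case True
  then obtain k0 where zero0: "step k0 = 0"
    by blast
  have "\<exists>k. step k = 0 \<and> step (Suc k) = 1"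
  proof (cases "step (Suc k0) = 1")
    case False
    then have "step (Suc k0) = -1"
      using step_Suc_ne_0[OF zero0] step_cases by auto
    moreover have "Suc h < n" "zigzag_step h h = 0" "zigzag_step h (Suc h) = -1"
      using n_eq h_ge by (simp_all add: zigzag_step_def)
    ultimately have "step (k0 + h) = 0" "step (Suc (k0 + h)) = 1"
      using zero_step_zigzag[OF zero0, of h] zero_step_zigzag[OF zero0, of "Suc h"] by simp_all
    then show ?thesis
      by blast
  qed (use zero0 in blast)
  then obtain k where zero: "step k = 0" and up: "step (Suc k) = 1"
    by blast
  define s where "s = (n - k mod n) mod n"
  have "step t = zigzag_step h ((t + s) mod n)" for t
  proof -
    have "(k + (t + s) mod n) mod n = t mod n"
      using mod_add_complement[of n k t] n_gt_2 unfolding s_def by simp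
    then have "step t = step (k + (t + s) mod n)"
      using periodic_mod[of step n, OF step_periodic] by metis
    also have "\<dots> = zigzag_step h ((t + s) mod n)"
      using zero_step_zigzag[OF zero] up n_gt_2 by simp
    finally show ?thesis .
  qed
  moreover have "s < n"
    using n_gt_2 unfolding s_def by simp
  ultimately show ?thesis
    by blast
qed

lemma tour_eqI:
  assumes V': "near_antipodal_tour n h V'" and "V' 0 = V 0"
    and steps: "\<And>k. tour_step n h V' k = step k"
  shows "V' = V"
proof
  fix k
  show "V' k = V k"
  proof (induction k)
    case (Suc k)
    then show ?case
      using near_antipodal_tour.V_Suc[OF V', of k] V_Suc[of k] steps[of k] by simp
  qed (fact assms(2))
qed

end

section \<open>Counting anchored tours\<close>

definition tour_shift :: "nat \<Rightarrow> (nat \<Rightarrow> int) \<Rightarrow> nat \<Rightarrow> nat \<Rightarrow> int" where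
  "tour_shift n V s k = (V (k + s) - V s) mod int n"

context near_antipodal_tour
begin

lemma tour_step_shift: "tour_step n h (tour_shift n V s) k = step (k + s)"
  by (simp add: tour_step_def tour_shift_def mod_simps)

lemma near_antipodal_tour_shift: "near_antipodal_tour n h (tour_shift n V s)"
proof
  fix k i j
  show "tour_shift n V s (k + n) = tour_shift n V s k"
    using V_periodic[of "k + s"] by (simp add: tour_shift_def ac_simps)
  show "\<bar>tour_step n h (tour_shift n V s) k\<bar> \<le> 1"
    unfolding tour_step_shift by (rule step_bound)
  assume ij: "i < n" "j < n" "tour_shift n V s i = tour_shift n V s j"
  then have "V (i + s) mod int n = V (j + s) mod int n"
    unfolding tour_shift_def by (metis diff_add_cancel mod_add_left_eq)
  then have "(i + s) mod n = (j + s) mod n"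
    by (simp add: V_mod_eq V_eq_iff)
  then show "i = j"
    using ij cong_add_rcancel_nat[of i s j n] by (simp add: cong_def)
qed (use n_eq h_ge n_gt_2 in \<open>simp_all add: tour_shift_def\<close>)

end

text \<open>\<open>zigzag h\<close> is the sequence of partial sums of \<open>zigzag_step h\<close>; adding \<open>h\<close> at odd
  positions accounts for the \<open>h\<close> contained in every move.\<close>

definition zigzag :: "nat \<Rightarrow> nat \<Rightarrow> int" where
  "zigzag h q = (if q = 0 then 0 else if q \<le> h then int q - 1 else int (2 * h) - int q)"

definition zigzag_tour :: "nat \<Rightarrow> nat \<Rightarrow> int" where
  "zigzag_tour h j = zigzag h (j mod (2 * h)) + (if odd j then int h else 0)"

lemma zigzag_bounds: "q < 2 * h \<Longrightarrow> 0 \<le> zigzag h q \<and> zigzag h q < int h"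
  by (auto simp: zigzag_def)

lemma zigzag_Suc:
  assumes "2 \<le> h" "q < 2 * h"
  shows "zigzag h (Suc q mod (2 * h)) = zigzag h q + zigzag_step h q"
proof (cases "Suc q = 2 * h")
  case True
  then show ?thesis
    using assms by (simp add: zigzag_def zigzag_step_def)
next
  case False
  then show ?thesis
    using assms by (auto simp: zigzag_def zigzag_step_def)
qed

lemma tour_step_zigzag_tour:
  assumes "2 \<le> h"
  shows "tour_step (2 * h) h (zigzag_tour h) j = zigzag_step h (j mod (2 * h))"
proof -
  let ?q = "j mod (2 * h)" and ?z = "zigzag_step h (j mod (2 * h))"
  have "zigzag h (Suc j mod (2 * h)) = zigzag h ?q + ?z"
    using zigzag_Suc[OF assms, of ?q] assms by (simp add: mod_Suc_eq)
  then have "zigzag_tour h (Suc j) - zigzag_tour h j = ?z + int h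
      \<or> zigzag_tour h (Suc j) - zigzag_tour h j = ?z + int h - int (2 * h)"
    by (auto simp: zigzag_tour_def)
  moreover have "0 \<le> ?z + int h" "?z + int h < int (2 * h)"
    using assms by (auto simp: zigzag_step_def)
  then have "(?z + int h) mod int (2 * h) = ?z + int h"
    "(?z + int h - int (2 * h)) mod int (2 * h) = ?z + int h"
    unfolding minus_mod_self2 by simp_all
  ultimately have "(zigzag_tour h (Suc j) - zigzag_tour h j) mod int (2 * h) = ?z + int h"
    by presburger
  then show ?thesis
    by (simp add: tour_step_def)
qed

lemma zigzag_tour_inj:
  assumes "2 \<le> h" "i < 2 * h" "j < 2 * h" "zigzag_tour h i = zigzag_tour h j"
  shows "i = j"
proof -
  have "odd i = odd j"
    using assms zigzag_bounds[of i h] zigzag_bounds[of j h]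
    by (auto simp: zigzag_tour_def split: if_splits)
  then have "zigzag h i = zigzag h j" "i + j \<noteq> 2 * h + 1" "i + j \<noteq> 1"
    using assms by (auto simp: zigzag_tour_def) presburger+
  then show ?thesis
    using assms by (auto simp: zigzag_def split: if_splits)
qed

lemma near_antipodal_tour_zigzag: "2 \<le> h \<Longrightarrow> near_antipodal_tour (2 * h) h (zigzag_tour h)"
proof unfold_locales
  fix k
  assume "2 \<le> h"
  then show "0 \<le> zigzag_tour h k" "zigzag_tour h k < int (2 * h)"
    using zigzag_bounds[of "k mod (2 * h)" h] by (auto simp: zigzag_tour_def)
qed (auto simp: zigzag_tour_inj tour_step_zigzag_tour zigzag_step_def zigzag_tour_def)

lemma
  assumes "n = 2 * h" "2 \<le> h"
  shows near_antipodal_tour_zigzag_shift: "near_antipodal_tour n h (tour_shift n (zigzag_tour h) s)"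
    and tour_step_zigzag_shift:
      "tour_step n h (tour_shift n (zigzag_tour h) s) k = zigzag_step h ((k + s) mod n)"
  using near_antipodal_tour.near_antipodal_tour_shift[OF near_antipodal_tour_zigzag]
    near_antipodal_tour.tour_step_shift[OF near_antipodal_tour_zigzag] tour_step_zigzag_tour assms
  by simp_all

definition linear_tour :: "nat \<Rightarrow> int \<Rightarrow> nat \<Rightarrow> int" where
  "linear_tour n c k = (int k * c) mod int n"

lemma coprime_half_add_unit:
  assumes "even h" "\<sigma> \<in> {1, -1}"
  shows "coprime (int h + \<sigma>) (int (2 * h))"
proof -
  have "coprime (int h + \<sigma>) (int h)"
    using assms(2) coprime_diff_one_left[of "int h"] by auto
  moreover have "odd (int h + \<sigma>)"
    using assms by auto
  ultimately show ?thesis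
    by simp
qed

lemma
  assumes "2 \<le> h" "even h" "\<sigma> \<in> {1, -1}"
  shows tour_step_linear_tour: "tour_step (2 * h) h (linear_tour (2 * h) (int h + \<sigma>)) k = \<sigma>"
    and near_antipodal_tour_linear: "near_antipodal_tour (2 * h) h (linear_tour (2 * h) (int h + \<sigma>))"
proof -
  let ?c = "int h + \<sigma>" and ?n = "int (2 * h)"
  have "(?c + int k * ?c - int k * ?c) mod ?n = ?c"
    using assms by auto
  then show step: "tour_step (2 * h) h (linear_tour (2 * h) ?c) k = \<sigma>" for k
    by (simp add: tour_step_def linear_tour_def mod_simps algebra_simps)
  show "near_antipodal_tour (2 * h) h (linear_tour (2 * h) ?c)"
  proof
    fix i j
    assume ij: "i < 2 * h" "j < 2 * h" "linear_tour (2 * h) ?c i = linear_tour (2 * h) ?c j"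
    then have "?n dvd (int i - int j) * ?c"
      unfolding linear_tour_def mod_eq_dvd_iff by (simp add: algebra_simps)
    then have "?n dvd int i - int j"
      using coprime_dvd_mult_left_iff coprime_half_add_unit[OF assms(2,3)] coprime_commute by blast
    then have "i mod (2 * h) = j mod (2 * h)"
      by (metis mod_eq_dvd_iff of_nat_eq_iff zmod_int)
    then show "i = j"
      using ij by simp
  next
    fix k
    have "int (k + 2 * h) * ?c = int k * ?c + ?c * ?n"
      by (simp add: algebra_simps)
    then show "linear_tour (2 * h) ?c (k + 2 * h) = linear_tour (2 * h) ?c k"
      unfolding linear_tour_def by simp
  qed (use assms step in \<open>auto simp: linear_tour_def\<close>)
qed

definition anchored_tours :: "nat \<Rightarrow> nat \<Rightarrow> (nat \<Rightarrow> int) set" where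
  "anchored_tours n h = {V. near_antipodal_tour n h V \<and> V 0 = 0}"

lemma anchored_tours_eq:
  assumes n: "n = 2 * h" and h: "2 \<le> h"
  shows "anchored_tours n h = tour_shift n (zigzag_tour h) ` {..<n}
    \<union> (if even h then {linear_tour n (int h + 1), linear_tour n (int h - 1)} else {})"
    (is "_ = ?Z ` _ \<union> ?L")
proof
  have Z: "near_antipodal_tour n h (?Z s)" "?Z s 0 = 0"
    "tour_step n h (?Z s) k = zigzag_step h ((k + s) mod n)" for s k
    using near_antipodal_tour_zigzag_shift[OF n h] tour_step_zigzag_shift[OF n h]
    by (simp_all add: tour_shift_def)
  have L: "near_antipodal_tour n h (linear_tour n (int h + \<sigma>))" "linear_tour n (int h + \<sigma>) 0 = 0"
    "tour_step n h (linear_tour n (int h + \<sigma>)) k = \<sigma>"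
    if "even h" "\<sigma> \<in> {1, -1}" for \<sigma> k
    using near_antipodal_tour_linear[OF h that] tour_step_linear_tour[OF h that]
    by (simp_all add: n linear_tour_def)
  show "?Z ` {..<n} \<union> ?L \<subseteq> anchored_tours n h"
    using Z L[of 1] L[of "-1"] by (auto simp: anchored_tours_def)
  show "anchored_tours n h \<subseteq> ?Z ` {..<n} \<union> ?L"
  proof
    fix V
    assume "V \<in> anchored_tours n h"
    then interpret near_antipodal_tour n h V
      by (simp add: anchored_tours_def)
    have V0: "V 0 = 0"
      using \<open>V \<in> anchored_tours n h\<close> by (simp add: anchored_tours_def)
    from step_classification show "V \<in> ?Z ` {..<n} \<union> ?L"
    proof
      assume "\<exists>s<n. \<forall>t. step t = zigzag_step h ((t + s) mod n)"
      then obtain s where "s < n" "\<And>t. step t = zigzag_step h ((t + s) mod n)"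
        by blast
      then show ?thesis
        using tour_eqI[OF Z(1)] Z(2) Z(3) V0 by auto
    next
      assume "even h \<and> (\<exists>\<sigma>\<in>{1, -1}. \<forall>t. step t = \<sigma>)"
      then obtain \<sigma> where "even h" "\<sigma> \<in> {1, -1}" "\<And>t. step t = \<sigma>"
        by blast
      then show ?thesis
        using tour_eqI[OF L(1)] L(2,3) V0 by auto
    qed
  qed
qed

lemma zigzag_step_shift_inj:
  assumes h: "2 \<le> h" and s: "s < 2 * h" "s' < 2 * h"
    and eq: "\<And>k. zigzag_step h ((k + s) mod (2 * h)) = zigzag_step h ((k + s') mod (2 * h))"
  shows "s = s'"
proof -
  define q where "q = (2 * h - s + s') mod (2 * h)"
  have "(2 * h - s + s) mod (2 * h) = 0" "(Suc (2 * h - s) + s) mod (2 * h) = 1"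
    using s h by (simp_all add: mod_Suc)
  then have zero: "zigzag_step h q = 0" and up: "zigzag_step h (Suc q mod (2 * h)) = 1"
    using eq[of "2 * h - s"] eq[of "Suc (2 * h - s)"] h
    by (simp_all add: q_def mod_Suc_eq zigzag_step_def)
  have "q \<noteq> h"
  proof
    assume "q = h"
    then have "Suc q mod (2 * h) = Suc h"
      using h by simp
    then show False
      using up by (simp add: zigzag_step_def)
  qed
  then have "q = 0"
    using zero by (auto simp: zigzag_step_def split: if_splits)
  show ?thesis
  proof (cases "s \<le> s'")
    case True
    then have "q = (s' - s + 2 * h) mod (2 * h)"
      using s unfolding q_def by (simp add: add.commute)
    then have "q = s' - s"
      using s by simp
    then show ?thesis
      using \<open>q = 0\<close> True by simp
  next
    case False
    then show ?thesis
      using \<open>q = 0\<close> s unfolding q_def by simp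
  qed
qed

lemma card_anchored_tours:
  assumes n: "n = 2 * h" and h: "2 \<le> h"
  shows "card (anchored_tours n h) = (if even h then n + 2 else n)"
proof -
  let ?Z = "tour_shift n (zigzag_tour h)"
  have "inj_on ?Z {..<n}"
    using zigzag_step_shift_inj[OF h] tour_step_zigzag_shift[OF n h] n
    by (intro inj_onI) (metis lessThan_iff)
  then have card_Z: "card (?Z ` {..<n}) = n"
    by (simp add: card_image)
  show ?thesis
  proof (cases "even h")
    case True
    let ?L = "\<lambda>\<sigma>. linear_tour n (int h + \<sigma>)"
    have L_step: "tour_step n h (?L \<sigma>) k = \<sigma>" if "\<sigma> \<in> {1, -1}" for \<sigma> k
      using tour_step_linear_tour[OF h True that] by (simp add: n)
    have L_notin: "?L \<sigma> \<notin> ?Z ` {..<n}" if "\<sigma> \<in> {1, -1}" for \<sigma>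
    proof
      assume "?L \<sigma> \<in> ?Z ` {..<n}"
      then obtain s where "s < n" "?L \<sigma> = ?Z s"
        by blast
      then have "\<sigma> = zigzag_step h ((n - s + s) mod n)"
        using L_step[OF that, of "n - s"] tour_step_zigzag_shift[OF n h, of s "n - s"] by simp
      then show False
        using that \<open>s < n\<close> by (simp add: zigzag_step_def)
    qed
    then have "?L 1 \<notin> ?Z ` {..<n}" "linear_tour n (int h - 1) \<notin> ?Z ` {..<n}"
      using L_notin[of 1] L_notin[of "-1"] by auto
    moreover have "?L 1 \<noteq> linear_tour n (int h - 1)"
      using L_step[of 1 0] L_step[of "-1" 0] by force
    ultimately show ?thesis
      using True card_Z by (simp add: anchored_tours_eq[OF n h])
  next
    case False
    then show ?thesis
      using card_Z by (simp add: anchored_tours_eq[OF n h])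
  qed
qed

section \<open>First rows\<close>

definition cyclic_inner_distance :: "nat \<Rightarrow> (nat \<Rightarrow> nat) \<Rightarrow> nat" where
  "cyclic_inner_distance n r = Min ((\<lambda>k. sym_dist n (r k) (r (Suc k mod n))) ` {..<n})"

definition cyclic_rows :: "nat \<Rightarrow> nat \<Rightarrow> (nat \<Rightarrow> nat) set" where
  "cyclic_rows n d = {r. (\<forall>j. n \<le> j \<longrightarrow> r j = 0) \<and> bij_betw r {0..<n} {1..n} \<and> r 0 = 1
     \<and> cyclic_inner_distance n r = d}"

lemma cyclic_inner_distance_le:
  "k < n \<Longrightarrow> cyclic_inner_distance n r \<le> sym_dist n (r k) (r (Suc k mod n))"
  unfolding cyclic_inner_distance_def by (rule Min_le) auto

lemma sym_dist_eq_half_minus: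
  assumes "n = 2 * h" "0 < h"
  shows "int (sym_dist n a b) = int h - \<bar>(int b - int a) mod int n - int h\<bar>"
proof -
  define d where "d = (int b - int a) mod int n"
  have d: "0 \<le> d" "d < int n"
    using assms unfolding d_def by simp_all
  have "(int a - int b) mod int n = (if d = 0 then 0 else int n - d)"
    using zmod_zminus1_eq_if[of "int b - int a" "int n"] unfolding d_def by simp
  then show ?thesis
    using d assms unfolding sym_dist_def d_def[symmetric] by auto
qed

definition row_of_tour :: "nat \<Rightarrow> (nat \<Rightarrow> int) \<Rightarrow> nat \<Rightarrow> nat" where
  "row_of_tour n V j = (if j < n then nat (V j) + 1 else 0)"

context near_antipodal_tour
begin

lemma sym_dist_row_of_tour:
  assumes "k < n"
  shows "int (sym_dist n (row_of_tour n V k) (row_of_tour n V (Suc k mod n))) = int h - \<bar>step k\<bar>"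
proof -
  have "V (Suc k mod n) = V (Suc k)"
    using periodic_mod[of V n, OF V_periodic] by simp
  then have "int (row_of_tour n V (Suc k mod n)) - int (row_of_tour n V k) = V (Suc k) - V k"
    using assms n_gt_2 V_nonneg by (simp add: row_of_tour_def)
  then show ?thesis
    using sym_dist_eq_half_minus[OF n_eq] h_ge by (simp add: tour_step_def)
qed

lemma row_of_tour_in_cyclic_rows:
  assumes V0: "V 0 = 0"
  shows "row_of_tour n V \<in> cyclic_rows n (h - 1)"
proof -
  let ?r = "row_of_tour n V"
  have inj: "inj_on ?r {0..<n}"
    using V_inj V_nonneg by (intro inj_onI) (auto simp: row_of_tour_def eq_nat_nat_iff)
  moreover have "?r ` {0..<n} \<subseteq> {1..n}"
    using V_less V_nonneg by (auto simp: row_of_tour_def Suc_le_eq nat_less_iff)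
  ultimately have "?r ` {0..<n} = {1..n}"
    by (simp add: card_image card_subset_eq)
  then have bij: "bij_betw ?r {0..<n} {1..n}"
    using inj by (simp add: bij_betw_def)
  have "cyclic_inner_distance n ?r = h - 1"
    unfolding cyclic_inner_distance_def
  proof (rule Min_eqI)
    fix d
    assume "d \<in> (\<lambda>k. sym_dist n (?r k) (?r (Suc k mod n))) ` {..<n}"
    then obtain k where "k < n" "d = sym_dist n (?r k) (?r (Suc k mod n))"
      by blast
    then show "h - 1 \<le> d"
      using sym_dist_row_of_tour[of k] step_bound[of k] by linarith
  next
    have "\<exists>k<n. step k \<noteq> 0"
      using step_Suc_ne_0[of 0] n_gt_2 by (cases "step 0 = 0") (auto intro: exI[of _ 0] exI[of _ 1])
    then obtain k where "k < n" "step k \<noteq> 0"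
      by blast
    then have "sym_dist n (?r k) (?r (Suc k mod n)) = h - 1"
      using sym_dist_row_of_tour[of k] step_cases[of k] h_ge by auto
    then show "h - 1 \<in> (\<lambda>k. sym_dist n (?r k) (?r (Suc k mod n))) ` {..<n}"
      using \<open>k < n\<close> by force
  qed simp
  moreover have "?r 0 = 1"
    using V0 n_gt_2 by (simp add: row_of_tour_def)
  ultimately show ?thesis
    using bij by (simp add: cyclic_rows_def row_of_tour_def)
qed

end

definition tour_of_row :: "nat \<Rightarrow> (nat \<Rightarrow> nat) \<Rightarrow> nat \<Rightarrow> int" where
  "tour_of_row n r k = int (r (k mod n)) - 1"

lemma
  assumes n: "n = 2 * h" and h: "2 \<le> h" and r: "r \<in> cyclic_rows n (h - 1)"
  shows tour_of_row_in_anchored_tours: "tour_of_row n r \<in> anchored_tours n h"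
    and row_of_tour_of_row: "row_of_tour n (tour_of_row n r) = r"
proof -
  have zero: "\<And>j. n \<le> j \<Longrightarrow> r j = 0" and bij: "bij_betw r {0..<n} {1..n}" and "r 0 = 1"
    and dist: "cyclic_inner_distance n r = h - 1"
    using r by (auto simp: cyclic_rows_def)
  have range: "1 \<le> r j \<and> r j \<le> n" if "j < n" for j
    using bij_betw_apply[OF bij, of j] that by simp
  show "row_of_tour n (tour_of_row n r) = r"
  proof
    fix j
    show "row_of_tour n (tour_of_row n r) j = r j"
      using range[of j] zero[of j] by (auto simp: row_of_tour_def tour_of_row_def)
  qed
  have "near_antipodal_tour n h (tour_of_row n r)"
  proof
    fix k i j
    show "0 \<le> tour_of_row n r k" "tour_of_row n r k < int n"
      using range[of "k mod n"] n h by (simp_all add: tour_of_row_def)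
    show "tour_of_row n r (k + n) = tour_of_row n r k"
      by (simp add: tour_of_row_def)
    show "i = j" if "i < n" "j < n" "tour_of_row n r i = tour_of_row n r j"
      using that bij_betw_imp_inj_on[OF bij] by (auto simp: tour_of_row_def inj_on_def)
    have "h - 1 \<le> sym_dist n (r (k mod n)) (r (Suc (k mod n) mod n))"
      using cyclic_inner_distance_le[of "k mod n" n r] dist n h by simp
    then show "\<bar>tour_step n h (tour_of_row n r) k\<bar> \<le> 1"
      using sym_dist_eq_half_minus[OF n, of "r (k mod n)" "r (Suc (k mod n) mod n)"] h
      by (simp add: tour_step_def tour_of_row_def mod_Suc_eq)
  qed (use n h in simp_all)
  then show "tour_of_row n r \<in> anchored_tours n h"
    using \<open>r 0 = 1\<close> by (simp add: anchored_tours_def tour_of_row_def)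
qed

lemma (in near_antipodal_tour) tour_of_row_of_tour: "tour_of_row n (row_of_tour n V) = V"
proof
  fix k
  show "tour_of_row n (row_of_tour n V) k = V k"
    using periodic_mod[of V n, OF V_periodic] V_nonneg[of "k mod n"] n_gt_2
    by (simp add: tour_of_row_def row_of_tour_def)
qed

lemma card_cyclic_rows:
  assumes n: "n = 2 * h" and h: "2 \<le> h"
  shows "card (cyclic_rows n (h - 1)) = (if even h then n + 2 else n)"
proof -
  have "cyclic_rows n (h - 1) = row_of_tour n ` anchored_tours n h"
  proof
    show "cyclic_rows n (h - 1) \<subseteq> row_of_tour n ` anchored_tours n h"
      using tour_of_row_in_anchored_tours[OF n h] row_of_tour_of_row[OF n h]
      by (metis image_eqI subsetI)
    show "row_of_tour n ` anchored_tours n h \<subseteq> cyclic_rows n (h - 1)"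
      using near_antipodal_tour.row_of_tour_in_cyclic_rows by (auto simp: anchored_tours_def)
  qed
  moreover have "inj_on (row_of_tour n) (anchored_tours n h)"
    using near_antipodal_tour.tour_of_row_of_tour
    by (intro inj_on_inverseI[where g = "tour_of_row n"]) (auto simp: anchored_tours_def)
  ultimately show ?thesis
    using card_anchored_tours[OF n h] by (simp add: card_image)
qed

section \<open>Circulant and back-circulant squares\<close>

lemma bij_betw_self_if_inj:
  assumes "inj_on f {0..<n}" "\<And>i. f i < (n::nat)"
  shows "bij_betw f {0..<n} {0..<n}"
proof -
  have "f ` {0..<n} \<subseteq> {0..<n}"
    using assms(2) by auto
  then show ?thesis
    using endo_inj_surj[of "{0..<n}" f] assms(1) by (simp add: bij_betw_def)
qed

lemma bij_betw_add_mod: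
  fixes n c :: nat
  assumes "0 < n"
  shows "bij_betw (\<lambda>j. (j + c) mod n) {0..<n} {0..<n}"
proof (rule bij_betw_self_if_inj)
  show "inj_on (\<lambda>j. (j + c) mod n) {0..<n}"
  proof (rule inj_onI)
    fix i j
    assume "i \<in> {0..<n}" "j \<in> {0..<n}" "(i + c) mod n = (j + c) mod n"
    then show "i = j"
      using cong_add_rcancel_nat[of i c j n] by (simp add: cong_def)
  qed
qed (use assms in simp)

lemma bij_betw_reflect_mod:
  fixes n c :: nat
  assumes "0 < n"
  shows "bij_betw (\<lambda>i. (c + n - i) mod n) {0..<n} {0..<n}"
proof (rule bij_betw_self_if_inj)
  show "inj_on (\<lambda>i. (c + n - i) mod n) {0..<n}"
  proof (rule inj_onI)
    fix i i'
    assume i: "i \<in> {0..<n}" "i' \<in> {0..<n}" and "(c + n - i) mod n = (c + n - i') mod n"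
    then have "[c + n - i = c + n - i'] (mod n)"
      by (simp add: cong_def)
    then have "[c + n - i + (i + i') = c + n - i' + (i + i')] (mod n)"
      using cong_add cong_refl by blast
    moreover have "c + n - i + (i + i') = (c + n) + i'" "c + n - i' + (i + i') = (c + n) + i"
      using i by simp_all
    ultimately have "[i' = i] (mod n)"
      by (simp add: cong_add_lcancel_nat)
    then show "i = i'"
      using i cong_less_modulus_unique_nat by fastforce
  qed
qed (use assms in simp)

lemma sym_dist_commute: "sym_dist n a b = sym_dist n b a"
  by (simp add: sym_dist_def min.commute)

lemma inner_distance_eq_cyclic_inner_distance:
  fixes n :: nat and r :: "nat \<Rightarrow> nat" and L :: "nat \<Rightarrow> nat \<Rightarrow> nat"
  defines "G \<equiv> (\<lambda>k. sym_dist n (r k) (r (Suc k mod n))) ` {..<n}"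
  assumes horizontal: "\<And>i j. i < n \<Longrightarrow> j + 1 < n \<Longrightarrow> sym_dist n (L i j) (L i (j + 1)) \<in> G"
    and vertical: "\<And>i j. i + 1 < n \<Longrightarrow> j < n \<Longrightarrow> sym_dist n (L i j) (L (i + 1) j) \<in> G"
    and covered: "\<And>k. k < n \<Longrightarrow> \<exists>i j. i < n \<and> j + 1 < n \<and> sym_dist n (r k) (r (Suc k mod n)) = sym_dist n (L i j) (L i (j + 1))"
  shows "inner_distance n L = cyclic_inner_distance n r"
proof -
  let ?H = "{sym_dist n (L i j) (L i (j + 1)) | i j. i < n \<and> j + 1 < n}"
  let ?V = "{sym_dist n (L i j) (L (i + 1) j) | i j. i + 1 < n \<and> j < n}"
  have "?H \<subseteq> G" "?V \<subseteq> G"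
    using horizontal vertical by blast+
  moreover have "G \<subseteq> ?H"
  proof
    fix d
    assume "d \<in> G"
    then obtain k where "k < n" "d = sym_dist n (r k) (r (Suc k mod n))"
      unfolding G_def by blast
    then show "d \<in> ?H"
      using covered by blast
  qed
  ultimately have "?H \<union> ?V = G"
    by blast
  then show ?thesis
    unfolding inner_distance_def cyclic_inner_distance_def G_def by simp
qed

lemma card_squares_eq_card_cyclic_rows:
  fixes F :: "(nat \<Rightarrow> nat) \<Rightarrow> nat \<Rightarrow> nat \<Rightarrow> nat"
  assumes n: "0 < n"
    and first_row: "\<And>r j. j < n \<Longrightarrow> F r 0 j = r j"
    and square: "\<And>r. bij_betw r {0..<n} {1..n} \<Longrightarrow> latin_square n (F r) \<and> P (F r)"
    and distance: "\<And>r. inner_distance n (F r) = cyclic_inner_distance n r"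
    and determined: "\<And>L. is_matrix n L \<Longrightarrow> P L \<Longrightarrow> F (L 0) = L"
  shows "card {L. latin_square n L \<and> P L \<and> inner_distance n L = d \<and> L 0 0 = 1}
    = card (cyclic_rows n d)"
proof -
  have "{L. latin_square n L \<and> P L \<and> inner_distance n L = d \<and> L 0 0 = 1} = F ` cyclic_rows n d"
  proof
    show "F ` cyclic_rows n d \<subseteq> {L. latin_square n L \<and> P L \<and> inner_distance n L = d \<and> L 0 0 = 1}"
    proof
      fix L
      assume "L \<in> F ` cyclic_rows n d"
      then obtain r where "L = F r" "bij_betw r {0..<n} {1..n}" "r 0 = 1" "cyclic_inner_distance n r = d"
        by (auto simp: cyclic_rows_def)
      then show "L \<in> {L. latin_square n L \<and> P L \<and> inner_distance n L = d \<and> L 0 0 = 1}"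
        using square[of r] distance[of r] first_row[of 0 r] n by simp
    qed
  next
    show "{L. latin_square n L \<and> P L \<and> inner_distance n L = d \<and> L 0 0 = 1} \<subseteq> F ` cyclic_rows n d"
    proof
      fix L
      assume L: "L \<in> {L. latin_square n L \<and> P L \<and> inner_distance n L = d \<and> L 0 0 = 1}"
      then have "is_matrix n L" "bij_betw (L 0) {0..<n} {1..n}"
        using n by (auto simp: latin_square_def)
      moreover from this have "F (L 0) = L"
        using L determined by blast
      ultimately have "L 0 \<in> cyclic_rows n d"
        using L distance[of "L 0"] by (auto simp: cyclic_rows_def is_matrix_def)
      then show "L \<in> F ` cyclic_rows n d"
        using \<open>F (L 0) = L\<close> by (metis image_eqI)
    qed
  qed
  moreover have "inj_on F (cyclic_rows n d)"
  proof (rule inj_onI)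
    fix r r'
    assume rows: "r \<in> cyclic_rows n d" "r' \<in> cyclic_rows n d" and eq: "F r = F r'"
    show "r = r'"
    proof
      fix j
      show "r j = r' j"
      proof (cases "j < n")
        case True
        then show ?thesis
          using first_row[of j r] first_row[of j r'] eq by simp
      next
        case False
        then show ?thesis
          using rows by (simp add: cyclic_rows_def)
      qed
    qed
  qed
  ultimately show ?thesis
    by (simp add: card_image)
qed

definition circulant_of :: "nat \<Rightarrow> (nat \<Rightarrow> nat) \<Rightarrow> nat \<Rightarrow> nat \<Rightarrow> nat" where
  "circulant_of n r i j = (if i < n \<and> j < n then r ((j + n - i) mod n) else 0)"

lemma circulant_entry:
  assumes "circulant n L" "i < n" "j < n"
  shows "L i ((j + i) mod n) = L 0 j"
  using assms(2)
proof (induction i)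
  case (Suc i)
  have "L (i + 1) (((j + i) mod n + 1) mod n) = L i ((j + i) mod n)"
    using assms(1) Suc.prems unfolding circulant_def by simp
  then show ?case
    using Suc by (simp add: mod_Suc_eq)
qed (use assms in simp)

lemma circulant_of_first_row:
  assumes "circulant n L" "is_matrix n L"
  shows "circulant_of n (L 0) = L"
proof (intro ext)
  fix i j
  show "circulant_of n (L 0) i j = L i j"
  proof (cases "i < n \<and> j < n")
    case True
    then have "((j + n - i) mod n + i) mod n = j"
      by (simp add: mod_add_left_eq)
    then show ?thesis
      using circulant_entry[OF assms(1), of i "(j + n - i) mod n"] True by (simp add: circulant_of_def)
  next
    case False
    then show ?thesis
      using assms(2) by (auto simp: circulant_of_def is_matrix_def)
  qed
qed

lemma circulant_circulant_of: "circulant n (circulant_of n r)"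
  unfolding circulant_def
proof (intro allI impI)
  fix i j
  assume ij: "i + 1 < n \<and> j < n"
  have "((j + 1) mod n + n - (i + 1)) mod n = (j + n - i) mod n"
  proof (cases "j + 1 < n")
    case False
    then have "j + 1 = n" "j + n - i = (n - (i + 1)) + n"
      using ij by arith+
    then show ?thesis
      by (metis mod_add_self2 mod_self add_0)
  qed simp
  then show "circulant_of n r (i + 1) ((j + 1) mod n) = circulant_of n r i j"
    using ij by (simp add: circulant_of_def)
qed

lemma latin_square_circulant_of:
  assumes n: "0 < n" and r: "bij_betw r {0..<n} {1..n}"
  shows "latin_square n (circulant_of n r)"
  unfolding latin_square_def
proof (intro conjI allI impI)
  show "is_matrix n (circulant_of n r)"
    by (simp add: is_matrix_def circulant_of_def)
  fix k
  assume k: "k < n"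
  have "bij_betw (r \<circ> (\<lambda>j. (j + (n - k)) mod n)) {0..<n} {1..n}"
    using bij_betw_add_mod[OF n] r by (rule bij_betw_trans)
  then show "bij_betw (\<lambda>j. circulant_of n r k j) {0..<n} {1..n}"
    by (rule bij_betw_cong[THEN iffD1, rotated]) (use k in \<open>simp add: circulant_of_def\<close>)
  have "bij_betw (r \<circ> (\<lambda>i. (k + n - i) mod n)) {0..<n} {1..n}"
    using bij_betw_reflect_mod[OF n] r by (rule bij_betw_trans)
  then show "bij_betw (\<lambda>i. circulant_of n r i k) {0..<n} {1..n}"
    by (rule bij_betw_cong[THEN iffD1, rotated]) (use k in \<open>simp add: circulant_of_def\<close>)
qed

lemma inner_distance_circulant_of:
  assumes n: "2 \<le> n"
  shows "inner_distance n (circulant_of n r) = cyclic_inner_distance n r"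
proof (rule inner_distance_eq_cyclic_inner_distance)
  fix i j
  assume "i < n" "j + 1 < n"
  then have "sym_dist n (circulant_of n r i j) (circulant_of n r i (j + 1))
      = sym_dist n (r ((j + n - i) mod n)) (r (Suc ((j + n - i) mod n) mod n))"
    by (simp add: circulant_of_def mod_Suc_eq Suc_diff_le)
  then show "sym_dist n (circulant_of n r i j) (circulant_of n r i (j + 1))
      \<in> (\<lambda>k. sym_dist n (r k) (r (Suc k mod n))) ` {..<n}"
    using n by simp
next
  fix i j
  assume "i + 1 < n" "j < n"
  then have "sym_dist n (circulant_of n r i j) (circulant_of n r (i + 1) j)
      = sym_dist n (r ((j + n - (i + 1)) mod n)) (r (Suc ((j + n - (i + 1)) mod n) mod n))"
    by (simp add: circulant_of_def mod_Suc_eq Suc_diff_Suc sym_dist_commute)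
  then show "sym_dist n (circulant_of n r i j) (circulant_of n r (i + 1) j)
      \<in> (\<lambda>k. sym_dist n (r k) (r (Suc k mod n))) ` {..<n}"
    using n by simp
next
  fix k
  assume k: "k < n"
  show "\<exists>i j. i < n \<and> j + 1 < n \<and> sym_dist n (r k) (r (Suc k mod n))
      = sym_dist n (circulant_of n r i j) (circulant_of n r i (j + 1))"
  proof (cases "k + 1 < n")
    case True
    moreover have "(k + 1 + n) mod n = Suc k mod n"
      by (metis Suc_eq_plus1 mod_add_self2)
    ultimately have "sym_dist n (r k) (r (Suc k mod n))
        = sym_dist n (circulant_of n r 0 k) (circulant_of n r 0 (k + 1))"
      by (simp only: circulant_of_def) simp
    moreover have "(0::nat) < n"
      using k by simp
    ultimately show ?thesis
      using True by blast
  next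
    case False
    then have "Suc k = n"
      using k by simp
    then have "k = n - 1" "Suc k mod n = 0"
      by simp_all
    then have "sym_dist n (r k) (r (Suc k mod n))
        = sym_dist n (circulant_of n r 1 0) (circulant_of n r 1 (0 + 1))"
      using n by (simp add: circulant_of_def)
    then show ?thesis
      using n by force
  qed
qed

definition back_circulant_of :: "nat \<Rightarrow> (nat \<Rightarrow> nat) \<Rightarrow> nat \<Rightarrow> nat \<Rightarrow> nat" where
  "back_circulant_of n r i j = (if i < n \<and> j < n then r ((i + j) mod n) else 0)"

lemma back_circulant_entry:
  assumes "back_circulant n L" "i < n" "j < n"
  shows "L i j = L 0 ((i + j) mod n)"
  using assms(2,3)
proof (induction i arbitrary: j)
  case (Suc i)
  have "L (Suc i) j = L i ((j + 1) mod n)"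
    using assms(1) Suc.prems unfolding back_circulant_def by simp
  also have "\<dots> = L 0 ((Suc i + j) mod n)"
    using Suc by (simp add: mod_add_right_eq)
  finally show ?case .
qed simp

lemma back_circulant_of_first_row:
  assumes "back_circulant n L" "is_matrix n L"
  shows "back_circulant_of n (L 0) = L"
proof (intro ext)
  fix i j
  show "back_circulant_of n (L 0) i j = L i j"
    using back_circulant_entry[OF assms(1), of i j] assms(2)
    by (auto simp: back_circulant_of_def is_matrix_def)
qed

lemma back_circulant_back_circulant_of: "back_circulant n (back_circulant_of n r)"
  unfolding back_circulant_def back_circulant_of_def by (simp add: mod_add_right_eq)

lemma latin_square_back_circulant_of:
  assumes n: "0 < n" and r: "bij_betw r {0..<n} {1..n}"
  shows "latin_square n (back_circulant_of n r)"
  unfolding latin_square_def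
proof (intro conjI allI impI)
  show "is_matrix n (back_circulant_of n r)"
    by (simp add: is_matrix_def back_circulant_of_def)
  fix k
  assume k: "k < n"
  have "bij_betw (r \<circ> (\<lambda>j. (j + k) mod n)) {0..<n} {1..n}"
    using bij_betw_add_mod[OF n] r by (rule bij_betw_trans)
  then show "bij_betw (\<lambda>j. back_circulant_of n r k j) {0..<n} {1..n}"
      "bij_betw (\<lambda>i. back_circulant_of n r i k) {0..<n} {1..n}"
    by (rule bij_betw_cong[THEN iffD1, rotated];
        use k in \<open>simp add: back_circulant_of_def add.commute\<close>)+
qed

lemma inner_distance_back_circulant_of:
  assumes n: "2 \<le> n"
  shows "inner_distance n (back_circulant_of n r) = cyclic_inner_distance n r"
proof (rule inner_distance_eq_cyclic_inner_distance)
  fix i j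
  assume "i < n" "j + 1 < n"
  then have "sym_dist n (back_circulant_of n r i j) (back_circulant_of n r i (j + 1))
      = sym_dist n (r ((i + j) mod n)) (r (Suc ((i + j) mod n) mod n))"
    by (simp add: back_circulant_of_def mod_Suc_eq)
  then show "sym_dist n (back_circulant_of n r i j) (back_circulant_of n r i (j + 1))
      \<in> (\<lambda>k. sym_dist n (r k) (r (Suc k mod n))) ` {..<n}"
    using n by simp
next
  fix i j
  assume "i + 1 < n" "j < n"
  then have "sym_dist n (back_circulant_of n r i j) (back_circulant_of n r (i + 1) j)
      = sym_dist n (r ((i + j) mod n)) (r (Suc ((i + j) mod n) mod n))"
    by (simp add: back_circulant_of_def mod_Suc_eq)
  then show "sym_dist n (back_circulant_of n r i j) (back_circulant_of n r (i + 1) j)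
      \<in> (\<lambda>k. sym_dist n (r k) (r (Suc k mod n))) ` {..<n}"
    using n by simp
next
  fix k
  assume k: "k < n"
  show "\<exists>i j. i < n \<and> j + 1 < n \<and> sym_dist n (r k) (r (Suc k mod n))
      = sym_dist n (back_circulant_of n r i j) (back_circulant_of n r i (j + 1))"
  proof (cases "k + 1 < n")
    case True
    then have "sym_dist n (r k) (r (Suc k mod n))
        = sym_dist n (back_circulant_of n r 0 k) (back_circulant_of n r 0 (k + 1))"
      by (simp add: back_circulant_of_def)
    moreover have "(0::nat) < n"
      using k by simp
    ultimately show ?thesis
      using True by blast
  next
    case False
    then have "Suc k = n"
      using k by simp
    moreover have "1 + (n - 2) = k" "1 + (n - 2 + 1) = Suc k"
      using n \<open>Suc k = n\<close> by simp_all
    ultimately have "(1 + (n - 2)) mod n = k" "(1 + (n - 2 + 1)) mod n = Suc k mod n"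
      by simp_all
    then have "sym_dist n (r k) (r (Suc k mod n))
        = sym_dist n (back_circulant_of n r 1 (n - 2)) (back_circulant_of n r 1 (n - 2 + 1))"
      using n k by (simp only: back_circulant_of_def) simp
    moreover have "1 < n" "n - 2 + 1 < n"
      using n by simp_all
    ultimately show ?thesis
      by blast
  qed
qed

lemma card_circulant_squares:
  assumes "2 \<le> n"
  shows "card {L. latin_square n L \<and> circulant n L \<and> inner_distance n L = d \<and> L 0 0 = 1}
    = card (cyclic_rows n d)"
  by (rule card_squares_eq_card_cyclic_rows[where F = "circulant_of n"])
    (use assms in \<open>simp_all add: circulant_of_def latin_square_circulant_of
      circulant_circulant_of inner_distance_circulant_of circulant_of_first_row\<close>)

lemma card_back_circulant_squares:
  assumes "2 \<le> n"
  shows "card {L. latin_square n L \<and> back_circulant n L \<and> inner_distance n L = d \<and> L 0 0 = 1}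
    = card (cyclic_rows n d)"
  by (rule card_squares_eq_card_cyclic_rows[where F = "back_circulant_of n"])
    (use assms in \<open>simp_all add: back_circulant_of_def latin_square_back_circulant_of
      back_circulant_back_circulant_of inner_distance_back_circulant_of back_circulant_of_first_row\<close>)

theorem mainTheorem12:
  fixes n :: nat
  assumes "n \<ge> 6" and "even n"
  shows "(n mod 4 = 0 \<longrightarrow>
            card {L. latin_square n L \<and> circulant n L \<and> inner_distance n L = n div 2 - 1 \<and> L 0 0 = 1} = n + 2 \<and>
            card {L. latin_square n L \<and> back_circulant n L \<and> inner_distance n L = n div 2 - 1 \<and> L 0 0 = 1} = n + 2)
       \<and> (n mod 4 = 2 \<longrightarrow>
            card {L. latin_square n L \<and> circulant n L \<and> inner_distance n L = n div 2 - 1 \<and> L 0 0 = 1} = n \<and>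
            card {L. latin_square n L \<and> back_circulant n L \<and> inner_distance n L = n div 2 - 1 \<and> L 0 0 = 1} = n)"
proof -
  define h where "h = n div 2"
  have n: "n = 2 * h" and h: "2 \<le> h"
    using assms unfolding h_def by auto
  have "even h \<longleftrightarrow> n mod 4 = 0" "odd h \<longleftrightarrow> n mod 4 = 2"
    using n by presburger+
  then show ?thesis
    using card_cyclic_rows[OF n h] card_circulant_squares[of n] card_back_circulant_squares[of n] h
    unfolding h_def[symmetric] by (simp add: n)
qed

end
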